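(* Fix an integer $n\ge 1$ and $p\in(0,1]$. Let \[ \textsc{Pol}=\Big\{(\mathbf x,\mathbf y)\ge 0:\ x_{1,1}+y_{1,1}=1,\ \ x_{t,s}+y_{t,s}=\tfrac1t\sum_{\sigma=1}^{t-1}\big(y_{t-1,\sigma}+(1-p)x_{t-1,\sigma}\big)\ \ \forall\, t\in\{2,\dots,n\},\ s\in[t]\Big\}, \] where $\mathbf x=(x_{t,s})_{t\in[n],s\in[t]}$ and $\mathbf y=(y_{t,s})_{t\in[n],s\in[t]}$. (i) For every (possibly randomized) policy $\mathcal P$ for the SP-UA, the vector defined by $x_{t,s}=\Pr(\mathcal P \text{ reaches state }(t,s)\text{ and makes an offer})$ and $y_{t,s}=\Pr(\mathcal P\text{ reaches state }(t,s)\text{ and passes})$ belongs to $\textsc{Pol}$. (ii) Conversely, for every $(\mathbf x,\mathbf y)\in\textsc{Pol}$, the randomized policy $\mathcal P$ that in state $(1,1)$ makes an offer with probability $x_{1,1}$, and for $t>1$ in state $(t,s)$ makes an offer with probability \[ \frac{t\,x_{t,s}}{\sum_{\sigma=1}^{t-1}\big(y_{t-1,\sigma}+(1-p)x_{t-1,\sigma}\big)} \] (when the denominator is $0$, the state is reached with probability $0$ and the action there is arbitrary), satisfies $x_{t,s}=\Pr(\mathcal P\text{ reaches }(t,s)\text{ and makes an offer})$ and $y_{t,s}=\Pr(\mathcal P\text{ reaches }(t,s)\text{ and passes})$ for all $t\in[n]$, $s\in[t]$.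
   Context: Secretary problem with uncertain acceptance (SP-UA): fix an integer $n\ge1$ and $p\in(0,1]$. There are $n$ candidates with distinct overall ranks $1,\dots,n$ (rank $1$ is best). They arrive one at a time in an order given by a uniformly random permutation; $R_t\in[n]$ denotes the overall rank of the $t$-th arriving candidate and $r_t\in[t]$ its partial rank, i.e., its rank among the first $t$ arrivals. At each time $t$, the decision maker, having observed $r_1,\dots,r_t$, either makes an offer to the $t$-th candidate or passes, irrevocably; policies may randomize. An offered candidate accepts independently with probability $p$, in which case the process stops; otherwise the process moves to the next candidate. The process ends when an offer is accepted or after candidate $n$. The policy is in state $(t,s)$ when it is examining the $t$-th candidate and $r_t=s$; "reaching state $(t,s)$" means the process has not stopped before time $t$ and $r_t=s$. *)

theory Defs
  imports "HOL-Probability.Probability" "HOL-Combinatorics.Multiset_Permutations"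
begin

(* An arrival order is a list R of length n, a permutation of the overall ranks {1..n};
   R ! (t-1) is the overall rank R_t of the t-th arriving candidate (t is 1-based). *)

definition prank :: "nat list \<Rightarrow> nat \<Rightarrow> nat" where
  "prank R t = card {i \<in> {1..t}. R ! (i - 1) \<le> R ! (t - 1)}"

definition pranks :: "nat list \<Rightarrow> nat list" where
  "pranks R = map (prank R) [1..<length R + 1]"

(* A (randomized, behavioural) policy: given the observed partial ranks r_1..r_t
   and its own past actions at times 1..t-1 (True = offer, False = pass),
   it returns the probability of making an offer to the t-th candidate. *)
type_synonym policy = "nat list \<Rightarrow> bool list \<Rightarrow> real"

definition valid_policy :: "policy \<Rightarrow> bool" where
  "valid_policy P \<longleftrightarrow> (\<forall>rs h. 0 \<le> P rs h \<and> P rs h \<le> 1)"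

(* run p P rs h k : the distribution of the full list of actions taken, given that
   the actions h were taken so far (all offers in h were rejected), the partial ranks
   of all candidates are rs, and k candidates remain.  The list stops growing as soon
   as an offer is accepted (acceptance happens independently with probability p). *)
fun run :: "real \<Rightarrow> policy \<Rightarrow> nat list \<Rightarrow> bool list \<Rightarrow> nat \<Rightarrow> bool list pmf" where
  "run p P rs h 0 = return_pmf h"
| "run p P rs h (Suc k) =
     bind_pmf (bernoulli_pmf (P (take (length h + 1) rs) h)) (\<lambda>a.
       if a then
         bind_pmf (bernoulli_pmf p) (\<lambda>acc.
           if acc then return_pmf (h @ [True]) else run p P rs (h @ [True]) k)
       else run p P rs (h @ [False]) k)"

definition spua :: "nat \<Rightarrow> real \<Rightarrow> policy \<Rightarrow> (nat list \<times> bool list) pmf" where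
  "spua n p P =
     bind_pmf (pmf_of_set (permutations_of_set {1..n})) (\<lambda>R.
       map_pmf (\<lambda>acts. (R, acts)) (run p P (pranks R) [] n))"

definition offer_prob :: "nat \<Rightarrow> real \<Rightarrow> policy \<Rightarrow> nat \<Rightarrow> nat \<Rightarrow> real" where
  "offer_prob n p P t s = measure_pmf.prob (spua n p P)
     {(R, acts). t \<le> length acts \<and> prank R t = s \<and> acts ! (t - 1)}"

definition pass_prob :: "nat \<Rightarrow> real \<Rightarrow> policy \<Rightarrow> nat \<Rightarrow> nat \<Rightarrow> real" where
  "pass_prob n p P t s = measure_pmf.prob (spua n p P)
     {(R, acts). t \<le> length acts \<and> prank R t = s \<and> \<not> acts ! (t - 1)}"

definition in_Pol :: "nat \<Rightarrow> real \<Rightarrow> (nat \<Rightarrow> nat \<Rightarrow> real) \<Rightarrow> (nat \<Rightarrow> nat \<Rightarrow> real) \<Rightarrow> bool" where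
  "in_Pol n p x y \<longleftrightarrow>
     (\<forall>t\<in>{1..n}. \<forall>s\<in>{1..t}. 0 \<le> x t s \<and> 0 \<le> y t s) \<and>
     x 1 1 + y 1 1 = 1 \<and>
     (\<forall>t\<in>{2..n}. \<forall>s\<in>{1..t}.
        x t s + y t s = (1 / real t) * (\<Sum>\<sigma>=1..t-1. y (t-1) \<sigma> + (1 - p) * x (t-1) \<sigma>))"

(* The policy of part (ii); c t s in [0,1] is the arbitrary action used when the
   denominator vanishes.  It depends only on the current state (t, r_t). *)
definition pol_policy :: "real \<Rightarrow> (nat \<Rightarrow> nat \<Rightarrow> real) \<Rightarrow> (nat \<Rightarrow> nat \<Rightarrow> real) \<Rightarrow> (nat \<Rightarrow> nat \<Rightarrow> real) \<Rightarrow> policy" where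
  "pol_policy p x y c rs h =
     (let t = length rs; s = last rs;
          D = (\<Sum>\<sigma>=1..t-1. y (t-1) \<sigma> + (1 - p) * x (t-1) \<sigma>)
      in if t = 1 then x 1 1
         else if D = 0 then c t s
         else real t * x t s / D)"

end

(*
  The partial ranks of a uniformly random arrival order are independent, r_t being uniform
  on [t] (they are a Lehmer code of the permutation).  Whether the process reaches time t
  depends only on r_1, ..., r_(t-1), so Pr(reach (t,s)) = Pr(reach time t) / t, while the
  process survives time t exactly when it passes there or its offer is rejected:
  Pr(reach time t+1) = sum_s (y_(t,s) + (1-p) x_(t,s)).  Together these are the equations of
  Pol, which proves (i).  Conversely, once Pr(reach time t) is known, the Pol equations fix
  Pr(reach (t,s)) = x_(t,s) + y_(t,s), and a policy offering in state (t,s) with probability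
  x/(x+y) splits it into x and y; the policy of (ii) does exactly this, so induction on t
  proves (ii).
*)

theory Submission
  imports Defs
begin

lemma measure_bind_pmf:
  "measure_pmf.prob (bind_pmf M N) X = measure_pmf.expectation M (\<lambda>x. measure_pmf.prob (N x) X)"
proof -
  have "ennreal (measure_pmf.prob (bind_pmf M N) X) = emeasure (bind_pmf M N) X"
    by (simp add: measure_pmf.emeasure_eq_measure)
  also have "\<dots> = (\<integral>\<^sup>+x. ennreal (measure_pmf.prob (N x) X) \<partial>M)"
    by (subst emeasure_bind_pmf) (simp add: measure_pmf.emeasure_eq_measure)
  also have "\<dots> = ennreal (measure_pmf.expectation M (\<lambda>x. measure_pmf.prob (N x) X))"
    by (rule nn_integral_eq_integral) (auto intro!: measure_pmf.integrable_const_bound[where B=1])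
  finally show ?thesis by (simp add: integral_nonneg_AE)
qed

text \<open>\<open>bernoulli_pmf\<close> clamps its parameter to [0,1], so policies need not be valid.\<close>

definition clamp01 :: "real \<Rightarrow> real" where
  "clamp01 q = max 0 (min 1 q)"

lemma clamp01_bounds: "0 \<le> clamp01 q" "clamp01 q \<le> 1"
  by (auto simp: clamp01_def)

lemma clamp01_id: "0 \<le> q \<Longrightarrow> q \<le> 1 \<Longrightarrow> clamp01 q = q"
  by (simp add: clamp01_def)

lemma bernoulli_pmf_clamp01: "bernoulli_pmf (clamp01 q) = bernoulli_pmf q"
proof -
  interpret pmf_as_function .
  show ?thesis by transfer (auto simp: clamp01_def fun_eq_iff)
qed

lemma measure_bind_bernoulli_pmf:
  "measure_pmf.prob (bind_pmf (bernoulli_pmf q) N) X =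
     clamp01 q * measure_pmf.prob (N True) X + (1 - clamp01 q) * measure_pmf.prob (N False) X"
  by (subst bernoulli_pmf_clamp01[symmetric]) (simp add: measure_bind_pmf clamp01_bounds)

lemma measure_pmf_prob_Collect_conj_const:
  "measure_pmf.prob M {a. A a \<and> c} = (if c then measure_pmf.prob M {a. A a} else 0)"
  "measure_pmf.prob M {a. A a \<and> c \<and> B a} = (if c then measure_pmf.prob M {a. A a \<and> B a} else 0)"
  by simp_all

lemma sum_permutations_of_set_snoc:
  fixes g :: "'a list \<Rightarrow> 'b::comm_monoid_add"
  assumes "finite A" "A \<noteq> {}"
  shows "(\<Sum>R\<in>permutations_of_set A. g R)
       = (\<Sum>x\<in>A. \<Sum>xs\<in>permutations_of_set (A - {x}). g (xs @ [x]))"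
proof -
  have rev: "(\<Sum>R\<in>permutations_of_set B. f R) = (\<Sum>R\<in>permutations_of_set B. f (rev R))"
    for B and f :: "'a list \<Rightarrow> 'b"
    by (subst rev_permutations_of_set[symmetric], subst sum.reindex) (auto intro: inj_onI)
  have "(\<Sum>R\<in>permutations_of_set A. g R)
      = (\<Sum>R\<in>(\<Union>x\<in>A. (#) x ` permutations_of_set (A - {x})). g (rev R))"
    by (subst rev) (simp only: permutations_of_set_nonempty[OF assms(2)])
  also have "\<dots> = (\<Sum>x\<in>A. \<Sum>xs\<in>permutations_of_set (A - {x}). g (rev xs @ [x]))"
    using assms(1) by (subst sum.UNION_disjoint) (auto simp: sum.reindex)
  also have "\<dots> = (\<Sum>x\<in>A. \<Sum>xs\<in>permutations_of_set (A - {x}). g (xs @ [x]))"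
  proof (rule sum.cong[OF refl])
    fix x
    show "(\<Sum>xs\<in>permutations_of_set (A - {x}). g (rev xs @ [x]))
        = (\<Sum>xs\<in>permutations_of_set (A - {x}). g (xs @ [x]))"
      using rev[of "\<lambda>xs. g (xs @ [x])"] by simp
  qed
  finally show ?thesis .
qed

lemma bij_betw_card_le:
  fixes A :: "'a::linorder set"
  assumes "finite A"
  shows "bij_betw (\<lambda>x. card {a\<in>A. a \<le> x}) A {1..card A}"
proof -
  let ?r = "\<lambda>x. card {a\<in>A. a \<le> x}"
  have mono: "?r x < ?r y" if "x \<in> A" "y \<in> A" "x < y" for x y
  proof -
    have "{a\<in>A. a \<le> x} \<subset> {a\<in>A. a \<le> y}"
      using that by force
    then show ?thesis
      using assms by (intro psubset_card_mono) auto
  qed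
  have inj: "inj_on ?r A"
  proof (rule inj_onI)
    fix x y assume "x \<in> A" "y \<in> A" "?r x = ?r y"
    then show "x = y"
      using mono[of x y] mono[of y x] by (cases x y rule: linorder_cases) auto
  qed
  have "?r ` A \<subseteq> {1..card A}"
  proof
    fix y assume "y \<in> ?r ` A"
    then obtain x where x: "x \<in> A" "y = ?r x" by auto
    then have "{a\<in>A. a \<le> x} \<noteq> {}" by auto
    then have "1 \<le> y"
      using x assms by (simp add: card_gt_0_iff Suc_le_eq)
    moreover have "y \<le> card A"
      using x assms by (simp add: card_mono)
    ultimately show "y \<in> {1..card A}" by simp
  qed
  moreover have "card (?r ` A) = card {1..card A}"
    using card_image[OF inj] by simp
  ultimately have "?r ` A = {1..card A}"
    by (intro card_subset_eq) auto
  with inj show ?thesis by (simp add: bij_betw_def)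
qed

lemma prank_snoc_last:
  assumes "distinct (xs @ [x])"
  shows "prank (xs @ [x]) (length xs + 1) = card {a\<in>set (xs @ [x]). a \<le> x}"
proof -
  let ?R = "xs @ [x]"
  have "{i\<in>{1..length ?R}. ?R ! (i - 1) \<le> x} = Suc ` {i. i < length ?R \<and> ?R ! i \<le> x}"
  proof (intro equalityI subsetI)
    fix i assume "i \<in> {i\<in>{1..length ?R}. ?R ! (i - 1) \<le> x}"
    then show "i \<in> Suc ` {i. i < length ?R \<and> ?R ! i \<le> x}"
      by (intro image_eqI[of _ _ "i - 1"]) auto
  qed auto
  then have "prank ?R (length xs + 1) = card (Suc ` {i. i < length ?R \<and> ?R ! i \<le> x})"
    unfolding prank_def by simp
  also have "\<dots> = length (filter (\<lambda>a. a \<le> x) ?R)"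
    by (simp only: card_image inj_Suc inj_on_subset[OF inj_Suc] length_filter_conv_card)
  also have "\<dots> = card ({a. a \<le> x} \<inter> set ?R)"
    using assms by (rule distinct_length_filter)
  also have "\<dots> = card {a\<in>set ?R. a \<le> x}"
    by (rule arg_cong[where f=card]) blast
  finally show ?thesis .
qed

lemma pranks_snoc:
  assumes "distinct (xs @ [x])"
  shows "pranks (xs @ [x]) = pranks xs @ [card {a\<in>set (xs @ [x]). a \<le> x}]"
proof -
  have "prank (xs @ [x]) i = prank xs i" if "i \<in> set [1..<length xs + 1]" for i
    unfolding prank_def using that by (intro arg_cong[where f=card]) (auto simp: nth_append)
  then have "map (prank (xs @ [x])) [1..<length xs + 1] = pranks xs"
    unfolding pranks_def by (rule map_cong[OF refl])
  then show ?thesis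
    using prank_snoc_last[OF assms] by (simp add: pranks_def)
qed

definition rank_seqs :: "nat \<Rightarrow> nat list set" where
  "rank_seqs m = {q. length q = m \<and> (\<forall>i<m. q ! i \<in> {1..Suc i})}"

lemma sum_rank_seqs_Suc:
  "(\<Sum>q\<in>rank_seqs (Suc m). f q) = (\<Sum>q\<in>rank_seqs m. \<Sum>s=1..Suc m. f (q @ [s]))"
proof -
  have "(\<Sum>q\<in>rank_seqs (Suc m). f q) = (\<Sum>(q, s)\<in>rank_seqs m \<times> {1..Suc m}. f (q @ [s]))"
  proof (rule sum.reindex_bij_witness[where i="\<lambda>(q, s). q @ [s]" and j="\<lambda>q. (butlast q, last q)"])
    fix q assume q: "q \<in> rank_seqs (Suc m)"
    then have "q \<noteq> []" by (auto simp: rank_seqs_def)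
    then show "(case (butlast q, last q) of (q, s) \<Rightarrow> q @ [s]) = q"
      "(case (butlast q, last q) of (q, s) \<Rightarrow> f (q @ [s])) = f q"
      by simp_all
    show "(butlast q, last q) \<in> rank_seqs m \<times> {1..Suc m}"
      using q \<open>q \<noteq> []\<close> by (auto simp: rank_seqs_def nth_butlast last_conv_nth)
  qed (auto simp: rank_seqs_def nth_append less_Suc_eq)
  then show ?thesis by (simp only: sum.cartesian_product)
qed

lemma sum_permutations_of_set_pranks:
  assumes "finite A"
  shows "(\<Sum>R\<in>permutations_of_set A. f (pranks R)) = (\<Sum>q\<in>rank_seqs (card A). f q)"
  using assms
proof (induction "card A" arbitrary: A f)
  case 0
  then show ?case by (simp add: rank_seqs_def pranks_def)
next
  case (Suc m)
  then have "A \<noteq> {}" by auto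
  let ?r = "\<lambda>x. card {a\<in>A. a \<le> x}"
  have "(\<Sum>R\<in>permutations_of_set A. f (pranks R))
      = (\<Sum>x\<in>A. \<Sum>xs\<in>permutations_of_set (A - {x}). f (pranks xs @ [?r x]))"
    unfolding sum_permutations_of_set_snoc[OF Suc.prems \<open>A \<noteq> {}\<close>]
  proof (intro sum.cong[OF refl])
    fix x xs assume "x \<in> A" "xs \<in> permutations_of_set (A - {x})"
    then have "distinct (xs @ [x])" "set (xs @ [x]) = A"
      by (auto simp: permutations_of_set_def)
    then show "f (pranks (xs @ [x])) = f (pranks xs @ [?r x])"
      by (simp add: pranks_snoc)
  qed
  also have "\<dots> = (\<Sum>x\<in>A. \<Sum>q\<in>rank_seqs m. f (q @ [?r x]))"
  proof (rule sum.cong[OF refl])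
    fix x assume "x \<in> A"
    then have "m = card (A - {x})"
      using Suc.hyps(2) Suc.prems by simp
    from Suc.hyps(1)[OF this finite_Diff[OF Suc.prems]] this
    show "(\<Sum>xs\<in>permutations_of_set (A - {x}). f (pranks xs @ [?r x]))
        = (\<Sum>q\<in>rank_seqs m. f (q @ [?r x]))"
      by simp
  qed
  also have "\<dots> = (\<Sum>q\<in>rank_seqs m. \<Sum>s=1..Suc m. f (q @ [s]))"
    using sum.reindex_bij_betw[OF bij_betw_card_le[OF Suc.prems], of "\<lambda>s. f (_ @ [s])"] Suc.hyps
    by (subst sum.swap) simp
  finally show ?case
    by (simp add: sum_rank_seqs_Suc Suc.hyps(2)[symmetric])
qed

lemma sum_rank_seqs_entry_uniform:
  assumes "i < n" "s \<in> {1..Suc i}"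
  shows "(\<Sum>q\<in>rank_seqs n. if q ! i = s then g (take i q) else 0)
       = (\<Sum>q\<in>rank_seqs n. g (take i q)) / Suc i"
  using assms(1)
proof (induction n)
  case (Suc m)
  show ?case
  proof (cases "i = m")
    case True
    have "(\<Sum>q\<in>rank_seqs (Suc m). if q ! i = s then g (take i q) else 0)
        = (\<Sum>q\<in>rank_seqs m. \<Sum>s'=1..Suc m. if s' = s then g q else 0)"
      unfolding sum_rank_seqs_Suc True by (auto simp: rank_seqs_def nth_append intro!: sum.cong)
    also have "\<dots> = (\<Sum>q\<in>rank_seqs m. g q)"
      using assms(2) True by (simp only: sum.delta finite_atLeastAtMost) simp
    also have "\<dots> = (\<Sum>q\<in>rank_seqs (Suc m). g (take i q)) / Suc i"
      unfolding sum_rank_seqs_Suc True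
      by (auto simp: rank_seqs_def sum_divide_distrib intro!: sum.cong)
    finally show ?thesis .
  next
    case False
    then have "i < m" using Suc.prems by simp
    then have eq: "(q @ [s']) ! i = q ! i" "take i (q @ [s']) = take i q"
      if "q \<in> rank_seqs m" for q s'
      using that by (auto simp: rank_seqs_def nth_append)
    have "(\<Sum>q\<in>rank_seqs (Suc m). if q ! i = s then g (take i q) else 0)
        = Suc m * (\<Sum>q\<in>rank_seqs m. if q ! i = s then g (take i q) else 0)"
      unfolding sum_rank_seqs_Suc sum_distrib_left
      by (rule sum.cong[OF refl]) (simp add: eq del: sum.cl_ivl_Suc take_append)
    also have "\<dots> = Suc m * (\<Sum>q\<in>rank_seqs m. g (take i q)) / Suc i"
      using Suc.IH[OF \<open>i < m\<close>] by simp
    also have "\<dots> = (\<Sum>q\<in>rank_seqs (Suc m). g (take i q)) / Suc i"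
      unfolding sum_rank_seqs_Suc sum_distrib_left
      by (rule arg_cong[where f="\<lambda>x. x / Suc i"], rule sum.cong[OF refl])
        (simp add: eq del: sum.cl_ivl_Suc take_append)
    finally show ?thesis .
  qed
qed simp

lemma length_permutations_of_atLeastAtMost:
  "R \<in> permutations_of_set {1..n} \<Longrightarrow> length R = n"
  by (simp add: length_finite_permutations_of_set)

lemma prank_eq_nth_pranks: "t \<in> {1..length R} \<Longrightarrow> prank R t = pranks R ! (t - 1)"
  by (auto simp: pranks_def nth_upt simp del: upt_Suc)

lemma prank_bounds: "t \<in> {1..length R} \<Longrightarrow> prank R t \<in> {1..t}"
proof -
  assume "t \<in> {1..length R}"
  then have "t \<in> {i\<in>{1..t}. R ! (i - 1) \<le> R ! (t - 1)}" by simp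
  then have "0 < prank R t"
    unfolding prank_def by (auto simp: card_gt_0_iff)
  moreover have "prank R t \<le> card {1..t}"
    unfolding prank_def by (rule card_mono) auto
  ultimately show ?thesis by simp
qed

lemma run_extends:
  "a \<in> set_pmf (run p P rs h k) \<Longrightarrow> \<exists>u. a = h @ u \<and> (0 < k \<longrightarrow> u \<noteq> [])"
proof (induction k arbitrary: h)
  case (Suc k)
  from Suc.prems show ?case by (auto split: if_splits dest!: Suc.IH)
qed simp

lemma measure_run_prefix_determined:
  assumes "\<And>u. h @ u \<in> E \<longleftrightarrow> h \<in> E"
  shows "measure_pmf.prob (run p P rs h k) E = indicator E h"
proof (cases "h \<in> E")
  case True
  have "AE a in run p P rs h k. a \<in> E"
    using True assms by (auto simp: AE_measure_pmf_iff dest!: run_extends)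
  then show ?thesis using True by (simp add: measure_pmf.prob_eq_1)
next
  case False
  then show ?thesis using assms by (auto simp: measure_pmf_zero_iff dest!: run_extends)
qed

lemma measure_run_reaches_next:
  assumes "0 < k" "t \<le> length h + 1"
  shows "measure_pmf.prob (run p P rs h k) {a. t \<le> length a} = 1"
proof -
  have "t \<le> length a" if "a \<in> set_pmf (run p P rs h k)" for a
  proof -
    from run_extends[OF that] assms(1) obtain u where "a = h @ u" "u \<noteq> []"
      by auto
    then show ?thesis using assms(2) by (cases u) auto
  qed
  then have "AE a in run p P rs h k. t \<le> length a"
    by (simp add: AE_measure_pmf_iff)
  then show ?thesis by (simp add: measure_pmf.prob_eq_1)
qed

lemma measure_spua:
  "measure_pmf.prob (spua n p P) E =
     (\<Sum>R\<in>permutations_of_set {1..n}. measure_pmf.prob (run p P (pranks R) [] n) {a. (R, a) \<in> E})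
     / fact n"
  unfolding spua_def measure_bind_pmf
  by (subst integral_pmf_of_set) (auto simp: vimage_def)

definition reach_prob :: "nat \<Rightarrow> real \<Rightarrow> policy \<Rightarrow> nat \<Rightarrow> real" where
  "reach_prob n p P t = measure_pmf.prob (spua n p P) {(R, acts). t \<le> length acts}"

lemma offer_prob_add_pass_prob:
  "offer_prob n p P t s + pass_prob n p P t s
     = measure_pmf.prob (spua n p P) {(R, acts). t \<le> length acts \<and> prank R t = s}"
proof -
  have "{(R, acts). t \<le> length acts \<and> prank R t = s}
      = {(R, acts). t \<le> length acts \<and> prank R t = s \<and> acts ! (t - 1)}
        \<union> {(R, acts). t \<le> length acts \<and> prank R t = s \<and> \<not> acts ! (t - 1)}"
    by auto
  then show ?thesis
    unfolding offer_prob_def pass_prob_def by (auto intro: measure_pmf.finite_measure_Union[symmetric])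
qed

lemma reach_prob_1:
  assumes "1 \<le> n"
  shows "reach_prob n p P 1 = 1"
  using assms unfolding reach_prob_def measure_spua
  by (simp add: measure_run_reaches_next)

context
  fixes p :: real
  assumes p: "0 \<le> p" "p \<le> 1"
begin

lemma measure_run_Suc:
  "measure_pmf.prob (run p P rs h (Suc k)) E =
     clamp01 (P (take (length h + 1) rs) h) *
       (p * indicator E (h @ [True]) + (1 - p) * measure_pmf.prob (run p P rs (h @ [True]) k) E)
   + (1 - clamp01 (P (take (length h + 1) rs) h)) * measure_pmf.prob (run p P rs (h @ [False]) k) E"
  using p by (simp add: measure_bind_bernoulli_pmf clamp01_id)

lemma measure_run_reach_take:
  assumes "take (t - 1) rs = take (t - 1) rs'"
  shows "measure_pmf.prob (run p P rs h k) {a. t \<le> length a}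
       = measure_pmf.prob (run p P rs' h k) {a. t \<le> length a}"
proof (induction k arbitrary: h)
  case (Suc k)
  show ?case
  proof (cases "t \<le> length h + 1")
    case True
    then show ?thesis by (simp del: run.simps add: measure_run_reaches_next)
  next
    case False
    then have "take (length h + 1) rs = take (length h + 1) rs'"
      using arg_cong[OF assms, of "take (length h + 1)"] by (simp add: min_def split: if_splits)
    then show ?thesis
      unfolding measure_run_Suc Suc.IH by (rule arg_cong)
  qed
qed simp

lemma measure_run_offer:
  assumes "\<And>h. P (take t rs) h = q" "length h < t"
  shows "measure_pmf.prob (run p P rs h k) {a. t \<le> length a \<and> a ! (t - 1)}
       = clamp01 q * measure_pmf.prob (run p P rs h k) {a. t \<le> length a}"
  using assms(2)
proof (induction k arbitrary: h)
  case (Suc k)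
  show ?case
  proof (cases "t = length h + 1")
    case True
    then show ?thesis
      using assms(1) by (simp del: run.simps add: measure_run_Suc measure_run_prefix_determined nth_append)
  next
    case False
    with Suc.prems have lt: "length (h @ [b]) < t" for b
      by auto
    have ind: "indicator {a. t \<le> length a} (h @ [True]) = (0::real)"
      "indicator {a. t \<le> length a \<and> a ! (t - 1)} (h @ [True]) = (0::real)"
      using lt[of True] by (simp_all add: indicator_def)
    show ?thesis
      unfolding measure_run_Suc Suc.IH[OF lt[of True]] Suc.IH[OF lt[of False]] ind
      by algebra
  qed
qed simp

lemma measure_run_reach_Suc:
  assumes "length h < t" "t < length h + k"
  shows "measure_pmf.prob (run p P rs h k) {a. t + 1 \<le> length a}
       = measure_pmf.prob (run p P rs h k) {a. t \<le> length a \<and> \<not> a ! (t - 1)}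
         + (1 - p) * measure_pmf.prob (run p P rs h k) {a. t \<le> length a \<and> a ! (t - 1)}"
  using assms
proof (induction k arbitrary: h)
  case (Suc k)
  show ?case
  proof (cases "t = length h + 1")
    case True
    with Suc.prems have "0 < k" by simp
    have "measure_pmf.prob (run p P rs (h @ [b]) k) {a. t \<le> length a \<and> a ! (t - 1)}
        = (if b then 1 else 0)"
      "measure_pmf.prob (run p P rs (h @ [b]) k) {a. t \<le> length a \<and> \<not> a ! (t - 1)}
        = (if b then 0 else 1)" for b
      using True by (subst measure_run_prefix_determined; auto simp: nth_append)+
    moreover have "measure_pmf.prob (run p P rs (h @ [b]) k) {a. t + 1 \<le> length a} = 1" for b
      using True \<open>0 < k\<close> by (simp add: measure_run_reaches_next)
    ultimately show ?thesis
      using True by (simp only: measure_run_Suc) (simp add: algebra_simps)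
  next
    case False
    with Suc.prems have lt: "length (h @ [b]) < t" "t < length (h @ [b]) + k" for b
      by auto
    have ind: "indicator {a. t + 1 \<le> length a} (h @ [True]) = (0::real)"
      "indicator {a. t \<le> length a \<and> a ! (t - 1)} (h @ [True]) = (0::real)"
      "indicator {a. t \<le> length a \<and> \<not> a ! (t - 1)} (h @ [True]) = (0::real)"
      using lt(1)[of True] by (simp_all add: indicator_def)
    show ?thesis
      unfolding measure_run_Suc Suc.IH[OF lt[of True]] Suc.IH[OF lt[of False]] ind
      by algebra
  qed
qed simp

lemma measure_spua_state:
  assumes "1 \<le> t" "t \<le> n" "s \<in> {1..t}"
  shows "measure_pmf.prob (spua n p P) {(R, acts). t \<le> length acts \<and> prank R t = s}
       = reach_prob n p P t / t"
proof -
  define g where "g q = measure_pmf.prob (run p P q [] n) {a. t \<le> length a}" for q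
  have g: "measure_pmf.prob (run p P rs [] n) {a. t \<le> length a} = g (take (t - 1) rs)" for rs
    unfolding g_def by (intro measure_run_reach_take) simp
  let ?f = "\<lambda>q. if q ! (t - 1) = s then g (take (t - 1) q) else 0"
  have "measure_pmf.prob (spua n p P) {(R, acts). t \<le> length acts \<and> prank R t = s}
      = (\<Sum>R\<in>permutations_of_set {1..n}. ?f (pranks R)) / fact n"
    unfolding measure_spua using assms
    by (auto simp: g prank_eq_nth_pranks length_permutations_of_atLeastAtMost
        measure_pmf_prob_Collect_conj_const intro!: sum.cong)
  also have "\<dots> = (\<Sum>q\<in>rank_seqs n. ?f q) / fact n"
    using sum_permutations_of_set_pranks[of "{1..n}" ?f] by simp
  also have "\<dots> = (\<Sum>q\<in>rank_seqs n. g (take (t - 1) q)) / t / fact n"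
  proof -
    have "t - 1 < n" "s \<in> {1..Suc (t - 1)}"
      using assms by auto
    from sum_rank_seqs_entry_uniform[OF this, of g] show ?thesis
      using assms(1) by simp
  qed
  also have "\<dots> = reach_prob n p P t / t"
    unfolding reach_prob_def measure_spua
    using sum_permutations_of_set_pranks[of "{1..n}" "\<lambda>q. g (take (t - 1) q)"] by (simp add: g)
  finally show ?thesis .
qed

lemma reach_prob_Suc:
  assumes "1 \<le> t" "t < n"
  shows "reach_prob n p P (t + 1)
       = (\<Sum>\<sigma>=1..t. pass_prob n p P t \<sigma> + (1 - p) * offer_prob n p P t \<sigma>)"
proof -
  let ?run = "\<lambda>R. run p P (pranks R) [] n"
  let ?pass = "\<lambda>R. measure_pmf.prob (?run R) {a. t \<le> length a \<and> \<not> a ! (t - 1)}"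
  let ?offer = "\<lambda>R. measure_pmf.prob (?run R) {a. t \<le> length a \<and> a ! (t - 1)}"
  have "reach_prob n p P (t + 1)
      = (\<Sum>R\<in>permutations_of_set {1..n}. ?pass R + (1 - p) * ?offer R) / fact n"
    unfolding reach_prob_def measure_spua using assms p measure_run_reach_Suc[of "[]" t n P]
    by simp
  also have "\<dots> = (\<Sum>R\<in>permutations_of_set {1..n}.
      \<Sum>\<sigma>=1..t. if prank R t = \<sigma> then ?pass R + (1 - p) * ?offer R else 0) / fact n"
    using assms prank_bounds
    by (auto simp: length_permutations_of_atLeastAtMost intro!: sum.cong)
  also have "\<dots> = (\<Sum>\<sigma>=1..t. \<Sum>R\<in>permutations_of_set {1..n}.
      (if prank R t = \<sigma> then ?pass R else 0) + (1 - p) * (if prank R t = \<sigma> then ?offer R else 0))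
      / fact n"
    by (subst sum.swap, rule arg_cong[where f="\<lambda>x. x / fact n"], intro sum.cong refl) simp
  also have "\<dots> = (\<Sum>\<sigma>=1..t. pass_prob n p P t \<sigma> + (1 - p) * offer_prob n p P t \<sigma>)"
    unfolding offer_prob_def pass_prob_def measure_spua
    by (simp add: measure_pmf_prob_Collect_conj_const sum.distrib sum_distrib_left
        sum_divide_distrib add_divide_distrib cong: if_cong)
  finally show ?thesis .
qed

lemma offer_prob_eq_clamp01:
  assumes "1 \<le> t" "t \<le> n"
    and policy: "\<And>rs h. length rs = t \<Longrightarrow> P rs h = \<phi> (last rs)"
  shows "offer_prob n p P t s
       = clamp01 (\<phi> s) * measure_pmf.prob (spua n p P) {(R, acts). t \<le> length acts \<and> prank R t = s}"
proof -
  have "measure_pmf.prob (run p P (pranks R) [] n) {a. t \<le> length a \<and> prank R t = s \<and> a ! (t - 1)}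
      = clamp01 (\<phi> s) * measure_pmf.prob (run p P (pranks R) [] n) {a. t \<le> length a \<and> prank R t = s}"
    if "R \<in> permutations_of_set {1..n}" for R
  proof (cases "prank R t = s")
    case True
    have n: "length (pranks R) = n"
      using that by (simp add: pranks_def length_permutations_of_atLeastAtMost)
    have "take t (pranks R) \<noteq> []"
      using assms(1,2) n by auto
    then have "last (take t (pranks R)) = pranks R ! (t - 1)"
      using assms(1,2) n by (simp add: last_conv_nth min_def)
    also have "\<dots> = s"
      using True assms(1,2) prank_eq_nth_pranks[of t R] that
      by (simp add: length_permutations_of_atLeastAtMost)
    finally have "last (take t (pranks R)) = s" .
    then have "P (take t (pranks R)) h = \<phi> s" for h
      using policy assms n by simp
    from measure_run_offer[of P t "pranks R" "\<phi> s" "[]" n, OF this] show ?thesis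
      using True assms(1) by simp
  qed simp
  then show ?thesis
    unfolding offer_prob_def measure_spua by (simp add: sum_distrib_left cong: sum.cong)
qed

lemma state_probs_eq:
  assumes "1 \<le> t" "t \<le> n" "s \<in> {1..t}"
    and policy: "\<And>rs h. length rs = t \<Longrightarrow> P rs h = \<phi> (last rs)"
    and "0 \<le> a" "0 \<le> b" "reach_prob n p P t = t * (a + b)"
    and "a + b \<noteq> 0 \<Longrightarrow> \<phi> s = a / (a + b)"
  shows "offer_prob n p P t s = a \<and> pass_prob n p P t s = b"
proof -
  have state: "measure_pmf.prob (spua n p P) {(R, acts). t \<le> length acts \<and> prank R t = s} = a + b"
    using measure_spua_state[OF assms(1-3)] assms(1,7) by simp
  have "offer_prob n p P t s = clamp01 (\<phi> s) * (a + b)"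
    using offer_prob_eq_clamp01[OF assms(1,2), where \<phi>=\<phi>, OF policy] state by simp
  also have "\<dots> = a"
  proof (cases "a + b = 0")
    case False
    then have "\<phi> s = a / (a + b)" by (rule assms(8))
    moreover have "0 < a + b"
      using False assms(5,6) by linarith
    then have "a / (a + b) \<le> 1"
      using assms(6) by simp
    ultimately show ?thesis
      using False assms(5,6) by (simp add: clamp01_id)
  next
    case True
    then have "a = 0"
      using assms(5,6) by linarith
    with True show ?thesis by simp
  qed
  finally have "offer_prob n p P t s = a" .
  moreover have "offer_prob n p P t s + pass_prob n p P t s = a + b"
    using offer_prob_add_pass_prob state by simp
  ultimately show ?thesis by simp
qed

lemma state_probs_in_Pol:
  assumes "1 \<le> n"
  shows "in_Pol n p (offer_prob n p P) (pass_prob n p P)"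
proof -
  have state: "offer_prob n p P t s + pass_prob n p P t s = reach_prob n p P t / t"
    if "t \<in> {1..n}" "s \<in> {1..t}" for t s
    using that by (simp add: offer_prob_add_pass_prob measure_spua_state)
  have reach: "reach_prob n p P t
      = (\<Sum>\<sigma>=1..t-1. pass_prob n p P (t - 1) \<sigma> + (1 - p) * offer_prob n p P (t - 1) \<sigma>)"
    if "t \<in> {2..n}" for t
  proof -
    have "1 \<le> t - 1" "t - 1 < n"
      using that by auto
    from reach_prob_Suc[OF this] that show ?thesis
      by simp
  qed
  show ?thesis
    unfolding in_Pol_def
  proof (intro conjI ballI)
    show "offer_prob n p P 1 1 + pass_prob n p P 1 1 = 1"
      using state[of 1 1] reach_prob_1[OF assms] assms by simp
  next
    fix t s assume "t \<in> {2..n}" "s \<in> {1..t}"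
    then show "offer_prob n p P t s + pass_prob n p P t s = 1 / real t *
        (\<Sum>\<sigma>=1..t-1. pass_prob n p P (t - 1) \<sigma> + (1 - p) * offer_prob n p P (t - 1) \<sigma>)"
      using state[of t s] reach[of t] by simp
  qed (simp_all add: offer_prob_def pass_prob_def)
qed

lemma state_probs_eq_Pol:
  assumes Pol: "in_Pol n p x y"
    and policy: "\<And>t rs h. length rs = t \<Longrightarrow> P rs h = \<phi> t (last rs)"
    and ratio: "\<And>t s. \<lbrakk>t \<in> {1..n}; s \<in> {1..t}; x t s + y t s \<noteq> 0\<rbrakk>
                  \<Longrightarrow> \<phi> t s = x t s / (x t s + y t s)"
    and "1 \<le> t" "t \<le> n"
  shows "\<forall>s\<in>{1..t}. offer_prob n p P t s = x t s \<and> pass_prob n p P t s = y t s"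
  using assms(4,5)
proof (induction t rule: nat_induct_at_least)
  case base
  from Pol have "reach_prob n p P 1 = 1 * (x 1 1 + y 1 1)"
    using reach_prob_1 base by (simp add: in_Pol_def)
  then have "offer_prob n p P 1 1 = x 1 1 \<and> pass_prob n p P 1 1 = y 1 1"
    using Pol base ratio[of 1 1]
    by (intro state_probs_eq[where \<phi>="\<phi> 1"]) (auto intro: policy simp: in_Pol_def)
  then show ?case by simp
next
  case (Suc t)
  then have IH: "\<forall>s\<in>{1..t}. offer_prob n p P t s = x t s \<and> pass_prob n p P t s = y t s"
    by simp
  have "reach_prob n p P (Suc t) = (\<Sum>\<sigma>=1..t. y t \<sigma> + (1 - p) * x t \<sigma>)"
    using reach_prob_Suc[of t n P] Suc IH by (auto intro!: sum.cong)
  then have reach: "reach_prob n p P (Suc t) = Suc t * (x (Suc t) s + y (Suc t) s)"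
    if "s \<in> {1..Suc t}" for s
    using Pol Suc that by (simp add: in_Pol_def)
  show ?case
  proof
    fix s assume s: "s \<in> {1..Suc t}"
    show "offer_prob n p P (Suc t) s = x (Suc t) s \<and> pass_prob n p P (Suc t) s = y (Suc t) s"
      using Pol Suc.prems s reach[OF s] ratio[of "Suc t" s]
      by (intro state_probs_eq[where \<phi>="\<phi> (Suc t)"]) (auto intro: policy simp: in_Pol_def)
  qed
qed

lemma pol_policy_state_probs:
  assumes Pol: "in_Pol n p x y" and "1 \<le> t" "t \<le> n"
  shows "\<forall>s\<in>{1..t}. offer_prob n p (pol_policy p x y c) t s = x t s
                  \<and> pass_prob n p (pol_policy p x y c) t s = y t s"
proof (rule state_probs_eq_Pol[OF Pol _ _ assms(2,3)])
  define D where "D t = (\<Sum>\<sigma>=1..t-1. y (t-1) \<sigma> + (1 - p) * x (t-1) \<sigma>)" for t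
  define \<phi> where "\<phi> t s = (if t = 1 then x 1 1 else if D t = 0 then c t s else t * x t s / D t)"
    for t s
  show "pol_policy p x y c rs h = \<phi> t (last rs)" if "length rs = t" for t rs h
    using that by (simp add: pol_policy_def \<phi>_def D_def Let_def)
  show "\<phi> t s = x t s / (x t s + y t s)"
    if "t \<in> {1..n}" "s \<in> {1..t}" "x t s + y t s \<noteq> 0" for t s
  proof (cases "t = 1")
    case False
    with Pol that have "D t = real t * (x t s + y t s)"
      by (auto simp: in_Pol_def D_def)
    with False that show ?thesis
      by (simp add: \<phi>_def)
  qed (use Pol that in \<open>simp add: \<phi>_def in_Pol_def\<close>)
qed

end

theorem theorem1:
  fixes n :: nat and p :: real
  assumes "1 \<le> n" and "0 < p" and "p \<le> 1"
  shows "(\<forall>P. valid_policy P \<longrightarrow>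
            in_Pol n p (offer_prob n p P) (pass_prob n p P)) \<and>
         (\<forall>x y c. in_Pol n p x y \<longrightarrow> (\<forall>t s. 0 \<le> c t s \<and> c t s \<le> 1) \<longrightarrow>
            (\<forall>t\<in>{1..n}. \<forall>s\<in>{1..t}.
               x t s = offer_prob n p (pol_policy p x y c) t s \<and>
               y t s = pass_prob n p (pol_policy p x y c) t s))"
proof (intro conjI allI impI)
  fix P :: policy
  show "in_Pol n p (offer_prob n p P) (pass_prob n p P)"
    using state_probs_in_Pol assms by simp
next
  fix x y c :: "nat \<Rightarrow> nat \<Rightarrow> real"
  assume "in_Pol n p x y"
  then show "\<forall>t\<in>{1..n}. \<forall>s\<in>{1..t}. x t s = offer_prob n p (pol_policy p x y c) t s \<and>
      y t s = pass_prob n p (pol_policy p x y c) t s"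
    using pol_policy_state_probs[of p n x y _ c] assms by fastforce
qed

end
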